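(* Let $t>0$ and let $u_1,\dots,u_n,v_1,\dots,v_n$ be unit vectors in $\mathbb R^d$. For $m\in[n]$ define the InfoNCE loss $$\mathcal L_{\mathrm{InfoNCE}}(U_{[m]},V_{[m]})=\frac1{2m}\sum_{i\in[m]}\log\Big(1+\sum_{j\in[m]\setminus\{i\}}\exp\big((v_j-v_i)^\top u_i/t\big)\Big)+\frac1{2m}\sum_{i\in[m]}\log\Big(1+\sum_{j\in[m]\setminus\{i\}}\exp\big((u_j-u_i)^\top v_i/t\big)\Big),$$ regarded as a function of the similarities $u_k^\top v_l$ ($k,l\in[m]$) as independent variables. Then for any integers $m_1\le m_2$ in $[n]$ and any distinct indices $i\ne j\in[m_1]$, $$0\le\frac{\partial}{\partial(u_i^\top v_j)}\mathcal L_{\mathrm{InfoNCE}}(U_{[m_2]},V_{[m_2]})\le\frac{\partial}{\partial(u_i^\top v_j)}\mathcal L_{\mathrm{InfoNCE}}(U_{[m_1]},V_{[m_1]}),$$ and the second inequality is an equality if and only if $m_1=m_2$.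
   Context: $[m]=\{1,\dots,m\}$ and $(U_{[m]},V_{[m]})=\{(u_i,v_i):i\in[m]\}$. This loss is the symmetric InfoNCE-based loss $\frac12\mathcal L_{\mathrm{info}}(U,V)+\frac12\mathcal L_{\mathrm{info}}(V,U)$ with $\mathcal L_{\mathrm{info}}(U,V)=\frac1m\sum_i\psi\big(\sum_{j\ne i}\phi((v_j-v_i)^\top u_i)\big)$, $\phi(x)=\exp(x/t)$, $\psi(x)=\log(1+x)$. *)

theory Defs
  imports "HOL-Analysis.Analysis"
begin

text \<open>Symmetric InfoNCE loss on the first m pairs (indices 1..m), written as a function of the
  similarity matrix s k l = u_k^T v_l (treated as independent variables).
  Note (v_j - v_i)^T u_i = s i j - s i i and (u_j - u_i)^T v_i = s j i - s i i.\<close>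
definition infonce :: "real \<Rightarrow> nat \<Rightarrow> (nat \<Rightarrow> nat \<Rightarrow> real) \<Rightarrow> real" where
  "infonce t m s =
     1 / (2 * real m) * (\<Sum>i\<in>{1..m}. ln (1 + (\<Sum>j\<in>{1..m} - {i}. exp ((s i j - s i i) / t))))
   + 1 / (2 * real m) * (\<Sum>i\<in>{1..m}. ln (1 + (\<Sum>j\<in>{1..m} - {i}. exp ((s j i - s i i) / t))))"

definition sim_upd :: "(nat \<Rightarrow> nat \<Rightarrow> real) \<Rightarrow> nat \<Rightarrow> nat \<Rightarrow> real \<Rightarrow> nat \<Rightarrow> nat \<Rightarrow> real" where
  "sim_upd s i j x = (\<lambda>k l. if k = i \<and> l = j then x else s k l)"

end

theory Submission
  imports Defs
begin

text \<open>The loss is the average of a row half and a column half, and the column half is the row half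
  of the transposed similarity matrix. In the row half, the entry s i j with i \<noteq> j occurs only in
  the term ln (1 + e + A), where e = exp ((s i j - s i i) / t) and A collects the remaining negatives
  of row i; its derivative is the softmax weight e / (t (1 + e + A)), which is positive and shrinks
  when more pairs enlarge A. Dividing by 2 m then makes the derivative strictly decrease in m.\<close>

definition infonce_half :: "real \<Rightarrow> nat \<Rightarrow> (nat \<Rightarrow> nat \<Rightarrow> real) \<Rightarrow> real" where
  "infonce_half t m s = (\<Sum>i\<in>{1..m}. ln (1 + (\<Sum>j\<in>{1..m} - {i}. exp ((s i j - s i i) / t))))"

definition infonce_weight :: "real \<Rightarrow> nat \<Rightarrow> (nat \<Rightarrow> nat \<Rightarrow> real) \<Rightarrow> nat \<Rightarrow> nat \<Rightarrow> real" where
  "infonce_weight t m s i j =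
     exp ((s i j - s i i) / t) / (t * (1 + (\<Sum>l\<in>{1..m} - {i}. exp ((s i l - s i i) / t))))"

lemma infonce_eq_halves:
  "infonce t m s = (infonce_half t m s + infonce_half t m (\<lambda>k l. s l k)) / (2 * real m)"
  unfolding infonce_def infonce_half_def by (simp add: add_divide_distrib)

lemma sim_upd_transpose:
  "(\<lambda>k l. sim_upd s i j x l k) = sim_upd (\<lambda>k l. s l k) j i x"
  unfolding sim_upd_def by (auto simp: fun_eq_iff)

lemma has_real_derivative_ln_add_exp:
  assumes "0 \<le> c"
  shows "((\<lambda>x. ln (c + exp ((x - a) / t))) has_real_derivative
           exp ((y - a) / t) / (t * (c + exp ((y - a) / t)))) (at y)"
proof -
  have "((\<lambda>x. c + exp ((x - a) / t)) has_real_derivative exp ((y - a) / t) / t) (at y)"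
    by (rule derivative_eq_intros DERIV_cdivide refl | simp)+
  from DERIV_chain2[OF DERIV_ln_divide this] show ?thesis
    using assms by (simp add: add_nonneg_pos mult.commute)
qed

lemma infonce_half_sim_upd:
  assumes "i \<in> {1..m}" "j \<in> {1..m}" "i \<noteq> j"
  shows "infonce_half t m (sim_upd s i j x) =
           ln ((1 + (\<Sum>l\<in>{1..m} - {i} - {j}. exp ((s i l - s i i) / t))) + exp ((x - s i i) / t))
           + (\<Sum>k\<in>{1..m} - {i}. ln (1 + (\<Sum>l\<in>{1..m} - {k}. exp ((s k l - s k k) / t))))"
proof -
  let ?s = "sim_upd s i j x"
  have row_i: "(\<Sum>l\<in>{1..m} - {i}. exp ((?s i l - ?s i i) / t))
      = exp ((x - s i i) / t) + (\<Sum>l\<in>{1..m} - {i} - {j}. exp ((s i l - s i i) / t))"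
    using assms by (subst sum.remove[of _ j]) (auto simp: sim_upd_def intro!: sum.cong)
  have other_rows: "(\<Sum>k\<in>{1..m} - {i}. ln (1 + (\<Sum>l\<in>{1..m} - {k}. exp ((?s k l - ?s k k) / t))))
      = (\<Sum>k\<in>{1..m} - {i}. ln (1 + (\<Sum>l\<in>{1..m} - {k}. exp ((s k l - s k k) / t))))"
    by (intro sum.cong) (auto simp: sim_upd_def)
  have "infonce_half t m ?s
      = ln (1 + (\<Sum>l\<in>{1..m} - {i}. exp ((?s i l - ?s i i) / t)))
        + (\<Sum>k\<in>{1..m} - {i}. ln (1 + (\<Sum>l\<in>{1..m} - {k}. exp ((?s k l - ?s k k) / t))))"
    unfolding infonce_half_def using assms(1) by (simp add: sum.remove)
  then show ?thesis
    unfolding row_i other_rows by (simp add: ac_simps)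
qed

lemma infonce_half_has_real_derivative:
  assumes "i \<in> {1..m}" "j \<in> {1..m}" "i \<noteq> j"
  shows "((\<lambda>x. infonce_half t m (sim_upd s i j x)) has_real_derivative infonce_weight t m s i j)
           (at (s i j))"
proof -
  let ?A = "\<Sum>l\<in>{1..m} - {i} - {j}. exp ((s i l - s i i) / t)"
  have "0 \<le> 1 + ?A"
    by (simp add: add_nonneg_nonneg sum_nonneg)
  from has_real_derivative_ln_add_exp[OF this, of "s i i" t "s i j"]
  have "((\<lambda>x. infonce_half t m (sim_upd s i j x)) has_real_derivative
          exp ((s i j - s i i) / t) / (t * (1 + ?A + exp ((s i j - s i i) / t)))) (at (s i j))"
    unfolding infonce_half_sim_upd[OF assms] using DERIV_add[OF _ DERIV_const] by fastforce
  moreover have "?A + exp ((s i j - s i i) / t) = (\<Sum>l\<in>{1..m} - {i}. exp ((s i l - s i i) / t))"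
    using assms by (subst (2) sum.remove[of _ j]) auto
  ultimately show ?thesis
    unfolding infonce_weight_def by (simp add: ac_simps)
qed

lemma infonce_has_real_derivative:
  assumes "i \<in> {1..m}" "j \<in> {1..m}" "i \<noteq> j"
  shows "((\<lambda>x. infonce t m (sim_upd s i j x)) has_real_derivative
           (infonce_weight t m s i j + infonce_weight t m (\<lambda>k l. s l k) j i) / (2 * real m))
           (at (s i j))"
proof -
  have "((\<lambda>x. infonce_half t m (sim_upd (\<lambda>k l. s l k) j i x)) has_real_derivative
          infonce_weight t m (\<lambda>k l. s l k) j i) (at (s i j))"
    using infonce_half_has_real_derivative[of j m i t "\<lambda>k l. s l k"] assms by auto
  with infonce_half_has_real_derivative[OF assms, of t s] show ?thesis
    unfolding infonce_eq_halves sim_upd_transpose using assms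
    by (auto intro!: derivative_eq_intros simp: add_divide_distrib)
qed

lemma infonce_weight_pos: "0 < t \<Longrightarrow> 0 < infonce_weight t m s i j"
  unfolding infonce_weight_def
  by (intro divide_pos_pos mult_pos_pos add_pos_nonneg sum_nonneg) auto

lemma infonce_weight_antimono:
  assumes "0 < t" "m1 \<le> m2"
  shows "infonce_weight t m2 s i j \<le> infonce_weight t m1 s i j"
  unfolding infonce_weight_def
proof (intro divide_left_mono mult_left_mono add_left_mono)
  show "(\<Sum>l\<in>{1..m1} - {i}. exp ((s i l - s i i) / t)) \<le> (\<Sum>l\<in>{1..m2} - {i}. exp ((s i l - s i i) / t))"
    using assms(2) by (intro sum_mono2) auto
qed (use assms in \<open>auto intro!: mult_pos_pos add_pos_nonneg sum_nonneg\<close>)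

theorem theorem5p6:
  fixes t :: real and n m1 m2 i j :: nat and u v :: "nat \<Rightarrow> real ^ 'd"
  assumes "t > 0"
    and "\<forall>k\<in>{1..n}. norm (u k) = 1" and "\<forall>k\<in>{1..n}. norm (v k) = 1"
    and "1 \<le> m1" and "m1 \<le> m2" and "m2 \<le> n"
    and "i \<in> {1..m1}" and "j \<in> {1..m1}" and "i \<noteq> j"
  defines "S \<equiv> (\<lambda>k l. u k \<bullet> v l)"
  shows "(\<lambda>x. infonce t m1 (sim_upd S i j x)) differentiable (at (S i j)) \<and>
         (\<lambda>x. infonce t m2 (sim_upd S i j x)) differentiable (at (S i j)) \<and>
         0 \<le> deriv (\<lambda>x. infonce t m2 (sim_upd S i j x)) (S i j) \<and>
         deriv (\<lambda>x. infonce t m2 (sim_upd S i j x)) (S i j)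
           \<le> deriv (\<lambda>x. infonce t m1 (sim_upd S i j x)) (S i j) \<and>
         (deriv (\<lambda>x. infonce t m2 (sim_upd S i j x)) (S i j)
           = deriv (\<lambda>x. infonce t m1 (sim_upd S i j x)) (S i j) \<longleftrightarrow> m1 = m2)"
proof -
  define w where "w m = infonce_weight t m S i j + infonce_weight t m (\<lambda>k l. S l k) j i" for m
  have has_deriv: "((\<lambda>x. infonce t m (sim_upd S i j x)) has_real_derivative w m / (2 * real m)) (at (S i j))"
    if "m1 \<le> m" for m
    using infonce_has_real_derivative[of i m j t S] assms(7-9) that unfolding w_def by auto
  note deriv_eq = has_deriv[THEN DERIV_imp_deriv]
  have w_pos: "0 < w m2"
    unfolding w_def using assms(1) by (intro add_pos_pos infonce_weight_pos)
  have w_antimono: "w m2 \<le> w m1"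
    unfolding w_def using assms(1,5) by (intro add_mono infonce_weight_antimono)
  have le: "w m2 / (2 * real m2) \<le> w m1 / (2 * real m1)"
    using w_pos w_antimono assms(4,5) by (intro frac_le) auto
  have eq_imp: "m1 = m2" if "w m2 / (2 * real m2) = w m1 / (2 * real m1)"
  proof (rule ccontr)
    assume "m1 \<noteq> m2"
    then have "w m2 / (2 * real m2) < w m1 / (2 * real m1)"
      using w_pos w_antimono assms(4,5) by (intro frac_less2) auto
    with that show False by simp
  qed
  show ?thesis
    using has_deriv[of m1] has_deriv[of m2] deriv_eq[of m1] deriv_eq[of m2] w_pos le eq_imp assms(5)
    by (auto simp: real_differentiable_def)
qed

end
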